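(* If $A_1,\ldots,A_n$ are sequentially distorted subsets of a group $G$, then $A:=A_1A_2\cdots A_n=\{a_1a_2\cdots a_n: a_i\in A_i\}$ is sequentially distorted in $G$. Moreover, if each $A_j$ is strongly distorted, then $A$ is strongly distorted.
   Context: For $S\subset G$ and $k\in\mathbb N$, $S^k=\{s_1\cdots s_k: s_i\in S\}$. A subset $A$ of $G$ is sequentially distorted if there is a sequence $(w_n)\subset\mathbb N$ such that for every sequence $(a_n)\subset A$ there is a finite $S\subset G$ with $a_n\in S^{w_n}$ for all $n$. It is strongly distorted if there are $m\in\mathbb N$ and $(w_n)\subset\mathbb N$ such that for every sequence $(a_n)\subset A$ there is $S\subset G$ of cardinality $m$ with $a_n\in S^{w_n}$ for all $n$. *)

theory Defs
  imports "HOL-Algebra.Group"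
begin

definition list_prod :: "('a, 'b) monoid_scheme \<Rightarrow> 'a list \<Rightarrow> 'a" where
  "list_prod G xs = foldr (\<lambda>x y. x \<otimes>\<^bsub>G\<^esub> y) xs \<one>\<^bsub>G\<^esub>"

definition set_pow :: "('a, 'b) monoid_scheme \<Rightarrow> 'a set \<Rightarrow> nat \<Rightarrow> 'a set" where
  "set_pow G S k = {list_prod G xs | xs. length xs = k \<and> set xs \<subseteq> S}"

definition set_list_prod :: "('a, 'b) monoid_scheme \<Rightarrow> 'a set list \<Rightarrow> 'a set" where
  "set_list_prod G As = {list_prod G xs | xs. list_all2 (\<lambda>x A. x \<in> A) xs As}"

text \<open>Natural numbers are taken to be positive (N = {1,2,...}).\<close>
definition seq_distorted :: "('a, 'b) monoid_scheme \<Rightarrow> 'a set \<Rightarrow> bool" where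
  "seq_distorted G A \<longleftrightarrow>
     (\<exists>w :: nat \<Rightarrow> nat. (\<forall>n. w n \<ge> 1) \<and>
        (\<forall>a :: nat \<Rightarrow> 'a. (\<forall>n. a n \<in> A) \<longrightarrow>
           (\<exists>S. S \<subseteq> carrier G \<and> finite S \<and> (\<forall>n. a n \<in> set_pow G S (w n)))))"

definition strongly_distorted :: "('a, 'b) monoid_scheme \<Rightarrow> 'a set \<Rightarrow> bool" where
  "strongly_distorted G A \<longleftrightarrow>
     (\<exists>(m :: nat) (w :: nat \<Rightarrow> nat). m \<ge> 1 \<and> (\<forall>n. w n \<ge> 1) \<and>
        (\<forall>a :: nat \<Rightarrow> 'a. (\<forall>n. a n \<in> A) \<longrightarrow>
           (\<exists>S. S \<subseteq> carrier G \<and> finite S \<and> card S = m \<and>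
                (\<forall>n. a n \<in> set_pow G S (w n)))))"

end

theory Submission
  imports Defs "HOL-Algebra.Coset"
begin

text \<open>If every sequence in A lies, termwise, in the w-th powers of one finite set S
  (depending on the sequence), and in B likewise in the v-th powers of some T, then every
  sequence in AB splits termwise into such sequences and lies in the (w + v)-th powers
  of S \<union> T. The only extra work in the strong case is to pad S \<union> T, whose cardinality is
  merely bounded, to a set of prescribed cardinality.\<close>

context monoid
begin

lemma list_prod_closed: "set xs \<subseteq> carrier G \<Longrightarrow> list_prod G xs \<in> carrier G"
  by (induction xs) (auto simp: list_prod_def)

lemma list_prod_append:
  assumes "set xs \<subseteq> carrier G" "set ys \<subseteq> carrier G"
  shows "list_prod G (xs @ ys) = list_prod G xs \<otimes> list_prod G ys"
  using assms(1)
proof (induction xs)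
  case Nil
  then show ?case using list_prod_closed[OF assms(2)] by (simp add: list_prod_def)
next
  case (Cons x xs)
  then show ?case
    using list_prod_closed[of xs] list_prod_closed[OF assms(2)] by (simp add: list_prod_def m_assoc)
qed

lemma set_pow_mono: "S \<subseteq> T \<Longrightarrow> set_pow G S k \<subseteq> set_pow G T k"
  unfolding set_pow_def by blast

lemma one_in_set_pow_one: "\<one> \<in> set_pow G {\<one>} 1"
  unfolding set_pow_def list_prod_def by (intro CollectI exI[of _ "[\<one>]"]) simp

lemma set_pow_mult:
  assumes "S \<subseteq> carrier G" "T \<subseteq> carrier G" "x \<in> set_pow G S k" "y \<in> set_pow G T l"
  shows "x \<otimes> y \<in> set_pow G (S \<union> T) (k + l)"
proof -
  obtain xs where xs: "x = list_prod G xs" "length xs = k" "set xs \<subseteq> S"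
    using assms(3) by (auto simp: set_pow_def)
  obtain ys where ys: "y = list_prod G ys" "length ys = l" "set ys \<subseteq> T"
    using assms(4) by (auto simp: set_pow_def)
  have "x \<otimes> y = list_prod G (xs @ ys)"
    using list_prod_append xs ys assms(1,2) by auto
  with xs ys show ?thesis
    unfolding set_pow_def by (intro CollectI exI[of _ "xs @ ys"]) auto
qed

end

lemma set_list_prod_Nil: "set_list_prod G [] = {\<one>\<^bsub>G\<^esub>}"
  by (simp add: set_list_prod_def list_prod_def)

lemma set_list_prod_Cons: "set_list_prod G (A # As) = A <#>\<^bsub>G\<^esub> set_list_prod G As"
proof -
  have "x \<in> set_list_prod G (A # As) \<longleftrightarrow>
      (\<exists>y \<in> A. \<exists>z \<in> set_list_prod G As. x = y \<otimes>\<^bsub>G\<^esub> z)" for x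
    unfolding set_list_prod_def list_prod_def
    by (auto simp: list_all2_Cons2) (blast, metis foldr_Cons comp_apply list_all2_Cons)
  then show ?thesis
    unfolding set_mult_def by blast
qed

lemma obtain_card_superset:
  assumes "S \<subseteq> C" "finite S" "card S \<le> m" "infinite C \<or> m \<le> card C"
  obtains T where "S \<subseteq> T" "T \<subseteq> C" "finite T" "card T = m"
proof -
  obtain U where U: "U \<subseteq> C - S" "finite U" "card U = m - card S"
  proof (cases "finite C")
    case True
    with assms have "m - card S \<le> card (C - S)"
      by (simp add: card_Diff_subset)
    then show ?thesis
      using obtain_subset_with_card_n that True by (metis finite_Diff finite_subset)
  next
    case False
    with assms(2) have "infinite (C - S)" by simp
    then show ?thesis
      using infinite_arbitrarily_large that by metis
  qed
  have "card (S \<union> U) = m"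
    using U assms(2,3) by (subst card_Un_disjoint) auto
  with U assms(1,2) show ?thesis
    using that[of "S \<union> U"] by blast
qed

text \<open>Distortion along a fixed word-length sequence w, the finite sets witnessing it being
  restricted to a class P: P is trivial for sequential distortion and bounds the
  cardinality for strong distortion.\<close>

definition distorted_along :: "('a, 'b) monoid_scheme \<Rightarrow> ('a set \<Rightarrow> bool) \<Rightarrow> (nat \<Rightarrow> nat) \<Rightarrow> 'a set \<Rightarrow> bool"
  where "distorted_along G P w A \<longleftrightarrow>
    (\<forall>a. (\<forall>n. a n \<in> A) \<longrightarrow>
      (\<exists>S. S \<subseteq> carrier G \<and> finite S \<and> P S \<and> (\<forall>n. a n \<in> set_pow G S (w n))))"

lemma distorted_alongE:
  assumes "distorted_along G P w A" "\<forall>n. a n \<in> A"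
  obtains S where "S \<subseteq> carrier G" "finite S" "P S" "\<forall>n. a n \<in> set_pow G S (w n)"
  using assms unfolding distorted_along_def by blast

lemma distorted_along_mono:
  assumes "distorted_along G P w A" "\<And>S. P S \<Longrightarrow> Q S"
  shows "distorted_along G Q w A"
  using assms unfolding distorted_along_def by meson

lemma (in monoid) distorted_along_one: "distorted_along G (\<lambda>S. card S \<le> 1) (\<lambda>_. 1) {\<one>}"
  unfolding distorted_along_def
  using one_in_set_pow_one by (auto intro!: exI[of _ "{\<one>}"])

lemma (in monoid) distorted_along_set_mult:
  assumes "distorted_along G P w A" "distorted_along G Q v B"
  shows "distorted_along G (\<lambda>S. \<exists>S1 S2. S = S1 \<union> S2 \<and> P S1 \<and> Q S2) (\<lambda>n. w n + v n) (A <#> B)"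
  unfolding distorted_along_def
proof (intro allI impI)
  fix a :: "nat \<Rightarrow> 'a"
  assume "\<forall>n. a n \<in> A <#> B"
  then have "\<forall>n. \<exists>y z. y \<in> A \<and> z \<in> B \<and> a n = y \<otimes> z"
    unfolding set_mult_def by blast
  then obtain b c where bc: "\<forall>n. b n \<in> A" "\<forall>n. c n \<in> B" "\<forall>n. a n = b n \<otimes> c n"
    by metis
  obtain S where S: "S \<subseteq> carrier G" "finite S" "P S" "\<forall>n. b n \<in> set_pow G S (w n)"
    using distorted_alongE[OF assms(1) bc(1)] .
  obtain T where T: "T \<subseteq> carrier G" "finite T" "Q T" "\<forall>n. c n \<in> set_pow G T (v n)"
    using distorted_alongE[OF assms(2) bc(2)] .
  have "a n \<in> set_pow G (S \<union> T) (w n + v n)" for n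
    using set_pow_mult[OF S(1) T(1)] S(4) T(4) bc(3) by simp
  with S T show "\<exists>U. U \<subseteq> carrier G \<and> finite U \<and> (\<exists>S1 S2. U = S1 \<union> S2 \<and> P S1 \<and> Q S2)
      \<and> (\<forall>n. a n \<in> set_pow G U (w n + v n))"
    by (intro exI[of _ "S \<union> T"]) auto
qed

lemma seq_distorted_iff_distorted_along:
  "seq_distorted G A \<longleftrightarrow> (\<exists>w. (\<forall>n. w n \<ge> 1) \<and> distorted_along G (\<lambda>_. True) w A)"
  unfolding seq_distorted_def distorted_along_def by simp

lemma (in monoid) strongly_distorted_iff_distorted_along:
  "strongly_distorted G A \<longleftrightarrow> (\<exists>m w. (\<forall>n. w n \<ge> 1) \<and> distorted_along G (\<lambda>S. card S \<le> m) w A)"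
proof
  assume "strongly_distorted G A"
  then obtain m w where "\<forall>n. w n \<ge> 1" "distorted_along G (\<lambda>S. card S = m) w A"
    unfolding strongly_distorted_def distorted_along_def by blast
  then show "\<exists>m w. (\<forall>n. w n \<ge> 1) \<and> distorted_along G (\<lambda>S. card S \<le> m) w A"
    using distorted_along_mono[of G "\<lambda>S. card S = m" w A "\<lambda>S. card S \<le> m"] by auto
next
  assume "\<exists>m w. (\<forall>n. w n \<ge> 1) \<and> distorted_along G (\<lambda>S. card S \<le> m) w A"
  then obtain m w where w: "\<forall>n. w n \<ge> 1" and m: "distorted_along G (\<lambda>S. card S \<le> m) w A"
    by blast
  \<comment> \<open>Strong distortion needs a positive size, and padding cannot exceed the carrier.\<close>
  define M where "M = (if finite (carrier G) then min (max 1 m) (card (carrier G)) else max 1 m)"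
  have "carrier G \<noteq> {}"
    using one_closed by blast
  then have M: "M \<ge> 1" "infinite (carrier G) \<or> M \<le> card (carrier G)"
    unfolding M_def by (auto simp: Suc_le_eq card_gt_0_iff)
  have "\<exists>T. T \<subseteq> carrier G \<and> finite T \<and> card T = M \<and> (\<forall>n. a n \<in> set_pow G T (w n))"
    if a: "\<forall>n. a n \<in> A" for a :: "nat \<Rightarrow> 'a"
  proof -
    obtain S where S: "S \<subseteq> carrier G" "finite S" "card S \<le> m" "\<forall>n. a n \<in> set_pow G S (w n)"
      using distorted_alongE[OF m a] .
    have "card S \<le> M"
      using S(3) card_mono[OF _ S(1)] unfolding M_def by simp
    then obtain T where T: "S \<subseteq> T" "T \<subseteq> carrier G" "finite T" "card T = M"
      using obtain_card_superset[OF S(1,2) _ M(2)] by blast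
    then show ?thesis
      using S(4) set_pow_mono[OF T(1)] by blast
  qed
  with w M(1) show "strongly_distorted G A"
    unfolding strongly_distorted_def by (intro exI[of _ M] exI[of _ w]) simp
qed

lemma (in monoid) seq_distorted_one: "seq_distorted G {\<one>}"
  unfolding seq_distorted_iff_distorted_along
  by (intro exI[of _ "\<lambda>_. 1"] conjI distorted_along_mono[OF distorted_along_one]) simp_all

lemma (in monoid) strongly_distorted_one: "strongly_distorted G {\<one>}"
  unfolding strongly_distorted_iff_distorted_along
  using distorted_along_one by (intro exI[of _ 1] exI[of _ "\<lambda>_. 1"]) simp

lemma (in monoid) seq_distorted_set_mult:
  assumes "seq_distorted G A" "seq_distorted G B"
  shows "seq_distorted G (A <#> B)"
proof -
  obtain w v where w: "\<forall>n. w n \<ge> 1"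
    and "distorted_along G (\<lambda>_. True) w A" "distorted_along G (\<lambda>_. True) v B"
    using assms unfolding seq_distorted_iff_distorted_along by blast
  then have "distorted_along G (\<lambda>_. True) (\<lambda>n. w n + v n) (A <#> B)"
    by (intro distorted_along_mono[OF distorted_along_set_mult]) simp_all
  moreover have "\<forall>n. w n + v n \<ge> 1"
    using w by (simp add: trans_le_add1)
  ultimately show ?thesis
    unfolding seq_distorted_iff_distorted_along by (intro exI[of _ "\<lambda>n. w n + v n"]) simp
qed

lemma (in monoid) strongly_distorted_set_mult:
  assumes "strongly_distorted G A" "strongly_distorted G B"
  shows "strongly_distorted G (A <#> B)"
proof -
  obtain k l w v where w: "\<forall>n. w n \<ge> 1"
    and A: "distorted_along G (\<lambda>S. card S \<le> k) w A"
    and B: "distorted_along G (\<lambda>S. card S \<le> l) v B"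
    using assms unfolding strongly_distorted_iff_distorted_along by blast
  from A B have "distorted_along G (\<lambda>S. \<exists>S1 S2. S = S1 \<union> S2 \<and> card S1 \<le> k \<and> card S2 \<le> l)
      (\<lambda>n. w n + v n) (A <#> B)"
    by (rule distorted_along_set_mult)
  then have "distorted_along G (\<lambda>S. card S \<le> k + l) (\<lambda>n. w n + v n) (A <#> B)"
    by (rule distorted_along_mono) (use card_Un_le order_trans add_mono in blast)
  moreover have "\<forall>n. w n + v n \<ge> 1"
    using w by (simp add: trans_le_add1)
  ultimately show ?thesis
    unfolding strongly_distorted_iff_distorted_along
    by (intro exI[of _ "k + l"] exI[of _ "\<lambda>n. w n + v n"]) simp
qed

theorem lemma3p4:
  fixes G :: "('a, 'b) monoid_scheme" and As :: "'a set list"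
  assumes "group G"
    and "\<forall>A \<in> set As. A \<subseteq> carrier G"
  shows "((\<forall>A \<in> set As. seq_distorted G A) \<longrightarrow> seq_distorted G (set_list_prod G As))
       \<and> ((\<forall>A \<in> set As. strongly_distorted G A) \<longrightarrow> strongly_distorted G (set_list_prod G As))"
proof -
  interpret monoid G
    using assms(1) by (rule group.is_monoid)
  show ?thesis
    by (induction As)
      (simp_all add: set_list_prod_Nil set_list_prod_Cons seq_distorted_one strongly_distorted_one
        seq_distorted_set_mult strongly_distorted_set_mult)
qed

end
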